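(* Fix $\alpha>0$. For $K\ge 1$ define $\mathcal{D}:[0,1]\times[-1,1]^K\to\mathbb{R}^K$ by \[ \mathcal{D}(t,c_{1},\dots,c_{K}):=\left(e^{-4\pi^{2}\alpha t}c_{1},\,e^{-4\pi^{2}\cdot 2^{2}\alpha t}c_{2},\,\dots,\,e^{-4\pi^{2}K^{2}\alpha t}c_{K}\right). \] Then for any $0<\epsilon<1$ and $K\ge1$ there exists an MLP network $\tilde{\mathcal{D}}:\mathbb{R}^{K+1}\to\mathbb{R}^K$, consisting of dense layers and $\tanh$ as activation function, with $O(K^{3}+K\log^{2}(\epsilon^{-1}))$ weights, such that \[ \|\tilde{\mathcal{D}}(t,c_{1},\dots,c_{K})-\mathcal{D}(t,c_{1},\dots,c_{K})\|_{\infty}\leq\epsilon \] for all inputs $c_{1},\dots,c_{K}\in[-1,1]$ and $t\in[0,1]$.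
   Context: An MLP (multilayer perceptron) network is a feed-forward composition of layers, each of the form $v_j=\sigma\circ(M_j v_{j-1}+b_j)$ with a matrix $M_j$ and bias vector $b_j$ and coordinate-wise nonlinearity $\sigma$ (here $\sigma=\tanh$); in some layers the bias and/or the nonlinearity may be omitted. The "number of weights" is the total number of parameters (entries of all $M_j$ and $b_j$). The operator $\mathcal{D}$ is the exact spectral time-stepping map for the heat equation $u_t=\alpha u_{xx}$ on $[0,1]$ in the basis $\{\sin(2\pi kx)\}_k$. *)

theory Defs
  imports Complex_Main
begin

text \<open>Vectors of dimension n are functions nat \<Rightarrow> real, only indices < n matter.\<close>

datatype layer = Layer
  (l_in: nat) (l_out: nat) (l_mat: "nat \<Rightarrow> nat \<Rightarrow> real")
  (l_bias: "(nat \<Rightarrow> real) option") (l_act: bool)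

definition eval_layer :: "layer \<Rightarrow> (nat \<Rightarrow> real) \<Rightarrow> (nat \<Rightarrow> real)" where
  "eval_layer L v = (\<lambda>i. if i < l_out L then
      (let z = (\<Sum>j<l_in L. l_mat L i j * v j)
             + (case l_bias L of None \<Rightarrow> 0 | Some b \<Rightarrow> b i)
       in if l_act L then tanh z else z)
    else 0)"

fun eval_mlp :: "layer list \<Rightarrow> (nat \<Rightarrow> real) \<Rightarrow> (nat \<Rightarrow> real)" where
  "eval_mlp [] v = v"
| "eval_mlp (L # Ls) v = eval_mlp Ls (eval_layer L v)"

fun mlp_dims_ok :: "layer list \<Rightarrow> nat \<Rightarrow> nat \<Rightarrow> bool" where
  "mlp_dims_ok [] n m = False"
| "mlp_dims_ok [L] n m = (l_in L = n \<and> l_out L = m)"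
| "mlp_dims_ok (L # L' # Ls) n m = (l_in L = n \<and> mlp_dims_ok (L' # Ls) (l_out L) m)"

definition layer_weights :: "layer \<Rightarrow> nat" where
  "layer_weights L = l_out L * l_in L + (if l_bias L = None then 0 else l_out L)"

definition num_weights :: "layer list \<Rightarrow> nat" where
  "num_weights Ls = (\<Sum>L\<leftarrow>Ls. layer_weights L)"

definition heat_step :: "real \<Rightarrow> real \<Rightarrow> (nat \<Rightarrow> real) \<Rightarrow> nat \<Rightarrow> real" where
  "heat_step \<alpha> t c k = exp (- 4 * pi^2 * (real k)^2 * \<alpha> * t) * c k"

definition mlp_input :: "nat \<Rightarrow> real \<Rightarrow> (nat \<Rightarrow> real) \<Rightarrow> nat \<Rightarrow> real" where
  "mlp_input K t c = (\<lambda>j. if j = 0 then t else if j \<le> K then c j else 0)"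

end

theory Submission
  imports Defs
begin

text \<open>Far out on its tail, \<open>tanh y = 1 - 2 exp (-2y) / (1 + exp (-2y))\<close> behaves like
  \<open>1 - 2 exp (-2y)\<close>, so a difference quotient of \<open>tanh\<close> at a large offset \<open>M\<close> reproduces
  the exponential:
  \<open>(tanh (M + s) - tanh (M + s - \<delta> c / 2)) exp (2M) / (2\<delta>) = exp (-2s) c + O(\<delta> + exp (-2M))\<close>.
  With \<open>s = 2\<pi>\<^sup>2 k\<^sup>2 \<alpha> t\<close>, one hidden layer of \<open>2K\<close> tanh units followed by a linear readout
  therefore approximates every component of the heat step; \<open>\<delta> = \<epsilon>/2\<close> and \<open>exp (-2M) = \<epsilon>/10\<close>
  give accuracy \<open>\<epsilon>\<close> with \<open>4K\<^sup>2 + 4K\<close> weights, a number independent of \<open>\<epsilon>\<close>.\<close>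

lemma tanh_diff_eq:
  fixes y h :: real
  shows "tanh y - tanh (y - h) =
    2 * exp (-2*y) * (exp (2*h) - 1) / ((1 + exp (-2*y)) * (1 + exp (-2*y) * exp (2*h)))"
proof -
  have shifted: "exp (-2 * (y - h)) = exp (-2*y) * exp (2*h)"
    by (simp add: algebra_simps flip: exp_add)
  have "(1 - p) / (1 + p) - (1 - p * w) / (1 + p * w) = 2 * p * (w - 1) / ((1 + p) * (1 + p * w))"
    if "0 < p" "0 < w" for p w :: real
  proof -
    have "1 + p \<noteq> 0" "1 + p * w \<noteq> 0" using that mult_pos_pos[OF that] by linarith+
    then show ?thesis by (simp add: field_simps)
  qed
  then show ?thesis
    unfolding tanh_real_altdef[of y] tanh_real_altdef[of "y - h"] shifted by simp
qed

lemma abs_exp_minus_one_minus_le: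
  fixes x :: real
  assumes "\<bar>x\<bar> \<le> 1"
  shows "\<bar>exp x - 1 - x\<bar> \<le> x^2"
proof -
  have "exp x \<le> 1 + x + x^2"
  proof (cases "x \<ge> 0")
    case True
    then show ?thesis using exp_bound[of x] assms by simp
  next
    case False
    have "x * (x * x) \<le> 0" using False by (simp add: mult_nonpos_nonneg)
    then have "1 \<le> (1 - x) * (1 + x + x^2)" by (simp add: algebra_simps power2_eq_square)
    also have "\<dots> \<le> exp (-x) * (1 + x + x^2)"
      using exp_ge_add_one_self[of "-x"] assms by (intro mult_right_mono) auto
    finally show ?thesis by (simp add: exp_minus field_simps)
  qed
  then show ?thesis using exp_ge_add_one_self[of x] zero_le_power2[of x] unfolding abs_le_iff by linarith
qed

lemma one_minus_inverse_prod_le: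
  fixes p q :: real
  assumes "0 \<le> p" "0 \<le> q"
  shows "1 - 1 / ((1 + p) * (1 + q)) \<le> p + q"
proof -
  define D where "D = (1 + p) * (1 + q)"
  have "1 \<le> D" using assms by (simp add: D_def algebra_simps)
  moreover have "D - 1 \<le> (p + q) * D"
    using assms by (simp add: D_def algebra_simps power2_eq_square)
  ultimately show ?thesis by (simp flip: D_def add: field_simps)
qed

lemma abs_exp_difference_quotient_le:
  fixes \<delta> c :: real
  assumes "0 < \<delta>" "\<delta> \<le> 1" "\<bar>c\<bar> \<le> 1"
  shows "\<bar>(exp (\<delta> * c) - 1) / \<delta> - c\<bar> \<le> \<delta>"
proof -
  have "\<bar>\<delta> * c\<bar> \<le> 1"
    using assms by (simp add: abs_mult mult_le_one)
  then have "\<bar>exp (\<delta> * c) - 1 - \<delta> * c\<bar> \<le> \<delta>^2 * c^2"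
    by (metis abs_exp_minus_one_minus_le power_mult_distrib)
  also have "\<dots> \<le> \<delta>^2"
    using assms by (simp add: abs_square_le_1 mult_left_le)
  finally show ?thesis
    using assms by (simp add: field_simps abs_div_pos power2_eq_square)
qed

lemma abs_mult_divide_minus_le:
  fixes u Q c D \<delta> B \<eta> :: real
  assumes u: "0 \<le> u" "u \<le> 1" and Q: "\<bar>Q - c\<bar> \<le> \<delta>" "\<bar>Q\<bar> \<le> B"
    and D: "1 \<le> D" "1 - 1/D \<le> \<eta>"
  shows "\<bar>u * Q / D - u * c\<bar> \<le> \<delta> + B * \<eta>"
proof -
  have "u * Q / D - u * c = u * ((Q - c) - Q * (1 - 1/D))"
    by (simp add: algebra_simps)
  then have "\<bar>u * Q / D - u * c\<bar> = u * \<bar>(Q - c) - Q * (1 - 1/D)\<bar>"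
    using u by (simp add: abs_mult)
  also have "\<dots> \<le> \<bar>(Q - c) - Q * (1 - 1/D)\<bar>"
    using u by (simp add: mult_left_le_one_le)
  also have "\<dots> \<le> \<bar>Q - c\<bar> + \<bar>Q\<bar> * (1 - 1/D)"
    using D(1) abs_triangle_ineq4[of "Q - c" "Q * (1 - 1/D)"] by (simp add: abs_mult)
  also have "\<dots> \<le> \<delta> + B * \<eta>"
    using Q D by (intro add_mono mult_mono) auto
  finally show ?thesis .
qed

lemma tanh_tail_difference_approx:
  fixes M s \<delta> c :: real
  assumes \<delta>: "0 < \<delta>" "\<delta> \<le> 1/2" and c: "\<bar>c\<bar> \<le> 1" and s: "0 \<le> s"
  shows "\<bar>(tanh (M + s) - tanh (M + s - \<delta> * c / 2)) * exp (2*M) / (2*\<delta>) - exp (-2*s) * c\<bar>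
           \<le> \<delta> + 5 * exp (-2*M)"
proof -
  define E where "E = exp (-2*M)"
  define u where "u = exp (-2*s)"
  define w where "w = exp (\<delta> * c)"
  define D where "D = (1 + E*u) * (1 + E*u*w)"
  have E: "0 < E" and u: "0 < u" "u \<le> 1"
    using s by (auto simp: E_def u_def)
  have Q: "\<bar>(w - 1) / \<delta> - c\<bar> \<le> \<delta>"
    unfolding w_def using abs_exp_difference_quotient_le \<delta> c by simp
  have "\<delta> * c \<le> 1/2"
    using \<delta> c mult_left_le[of c \<delta>] unfolding abs_le_iff by linarith
  then have "w \<le> 2"
    unfolding w_def using exp_half_le2 by (meson exp_le_cancel_iff order_trans)
  have "E*u \<le> E"
    using u E by (simp add: mult_left_le)
  then have "E*u*w \<le> 2*E"
    using mult_mono[OF _ \<open>w \<le> 2\<close>] E by (simp add: w_def mult.commute)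
  have pos: "0 < E*u" "0 < E*u*w"
    using E u by (simp_all add: w_def)
  have "\<bar>(w - 1) / \<delta>\<bar> \<le> 3/2"
    using Q c \<delta> by linarith
  moreover have D: "1 \<le> D"
    using pos mult_pos_pos[OF pos] unfolding D_def by (simp add: algebra_simps)
  moreover have "1 - 1/D \<le> 3*E"
    using one_minus_inverse_prod_le[of "E*u" "E*u*w"] pos \<open>E*u \<le> E\<close> \<open>E*u*w \<le> 2*E\<close>
    unfolding D_def by linarith
  ultimately have bound: "\<bar>u * ((w - 1) / \<delta>) / D - u * c\<bar> \<le> \<delta> + 3/2 * (3*E)"
    using u Q by (intro abs_mult_divide_minus_le) auto
  have "exp (-2 * (M + s)) = E*u"
    by (simp add: E_def u_def algebra_simps flip: exp_add)
  then have "tanh (M + s) - tanh (M + s - \<delta> * c / 2) = 2*E*u*(w - 1) / D"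
    using tanh_diff_eq[of "M + s" "\<delta> * c / 2"] by (simp add: w_def D_def)
  moreover have "exp (2*M) = 1/E"
    by (simp add: E_def exp_minus divide_inverse)
  ultimately have "(tanh (M + s) - tanh (M + s - \<delta> * c / 2)) * exp (2*M) / (2*\<delta>)
      = u * ((w - 1) / \<delta>) / D"
    using \<delta> E D by simp
  then show ?thesis
    unfolding E_def[symmetric] u_def[symmetric] using bound E by linarith
qed

lemma sum_lessThan_delta_mult:
  fixes n p :: nat and x :: real
  shows "(\<Sum>j<n. (if j = p then x else 0) * v j) = (if p < n then x * v p else 0)"
  by (simp add: if_distrib[where f = "\<lambda>y. y * _"] sum.delta[of _ p "\<lambda>_. x * v p"] cong: if_cong)

definition hidden_layer :: "nat \<Rightarrow> (nat \<Rightarrow> real) \<Rightarrow> real \<Rightarrow> real \<Rightarrow> layer" where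
  "hidden_layer K a \<delta> M = Layer (K + 1) (2 * K)
     (\<lambda>i j. (if j = 0 then a (i mod K + 1) / 2 else 0) + (if i < K \<and> j = i + 1 then - \<delta> / 2 else 0))
     (Some (\<lambda>_. M)) True"

definition readout_layer :: "nat \<Rightarrow> real \<Rightarrow> layer" where
  "readout_layer K g = Layer (2 * K) K
     (\<lambda>i j. (if j = i + K then g else 0) + (if j = i then - g else 0)) None False"

definition heat_net :: "nat \<Rightarrow> (nat \<Rightarrow> real) \<Rightarrow> real \<Rightarrow> real \<Rightarrow> layer list" where
  "heat_net K a \<delta> M = [hidden_layer K a \<delta> M, readout_layer K (exp (2*M) / (2*\<delta>))]"

lemma eval_hidden_layer:
  assumes "i < K"
  shows "eval_layer (hidden_layer K a \<delta> M) v i = tanh (M + a (i+1) * v 0 / 2 - \<delta> * v (i+1) / 2)"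
    and "eval_layer (hidden_layer K a \<delta> M) v (i + K) = tanh (M + a (i+1) * v 0 / 2)"
  using assms
  by (simp_all add: eval_layer_def hidden_layer_def distrib_right sum.distrib sum_lessThan_delta_mult)

lemma eval_readout_layer:
  assumes "i < K"
  shows "eval_layer (readout_layer K g) h i = g * (h (i + K) - h i)"
  using assms
  by (simp add: eval_layer_def readout_layer_def distrib_right sum.distrib sum_lessThan_delta_mult
      right_diff_distrib)

lemma eval_heat_net:
  assumes "i < K"
  shows "eval_mlp (heat_net K a \<delta> M) v i =
    (tanh (M + a (i+1) * v 0 / 2) - tanh (M + a (i+1) * v 0 / 2 - \<delta> * v (i+1) / 2))
      * exp (2*M) / (2*\<delta>)"
  using assms by (simp add: heat_net_def eval_readout_layer eval_hidden_layer)

lemma mlp_dims_ok_heat_net: "mlp_dims_ok (heat_net K a \<delta> M) (K + 1) K"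
  by (simp add: heat_net_def hidden_layer_def readout_layer_def)

lemma num_weights_heat_net_le:
  assumes "1 \<le> K"
  shows "real (num_weights (heat_net K a \<delta> M)) \<le> 8 * real K ^ 3"
proof -
  have "num_weights (heat_net K a \<delta> M) = 4 * K^2 + 4 * K"
    by (simp add: heat_net_def hidden_layer_def readout_layer_def num_weights_def layer_weights_def
        algebra_simps power2_eq_square)
  moreover have "K^2 \<le> K^3" "K \<le> K^3"
    using assms power_increasing[of 2 3 K] power_increasing[of 1 3 K] by simp_all
  ultimately have "num_weights (heat_net K a \<delta> M) \<le> 8 * K^3"
    by linarith
  then show ?thesis
    by (metis of_nat_le_iff of_nat_mult of_nat_numeral of_nat_power)
qed

lemma eval_heat_net_approx:
  assumes "0 < \<delta>" "\<delta> \<le> 1/2" "0 \<le> a (i+1) * v 0" "\<bar>v (i+1)\<bar> \<le> 1" "i < K"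
  shows "\<bar>eval_mlp (heat_net K a \<delta> M) v i - exp (- a (i+1) * v 0) * v (i+1)\<bar>
           \<le> \<delta> + 5 * exp (-2*M)"
  using tanh_tail_difference_approx[of \<delta> "v (i+1)" "a (i+1) * v 0 / 2" M] assms
  by (simp add: eval_heat_net algebra_simps)

theorem theorem2:
  fixes \<alpha> :: real
  assumes "\<alpha> > 0"
  shows "\<exists>C::real. \<forall>\<epsilon>::real. \<forall>K::nat. 0 < \<epsilon> \<longrightarrow> \<epsilon> < 1 \<longrightarrow> K \<ge> 1 \<longrightarrow>
    (\<exists>net. mlp_dims_ok net (K + 1) K
       \<and> real (num_weights net) \<le> C * (real K ^ 3 + real K * (ln (1 / \<epsilon>))^2)
       \<and> (\<forall>t c. 0 \<le> t \<and> t \<le> 1 \<and> (\<forall>k\<in>{1..K}. \<bar>c k\<bar> \<le> 1) \<longrightarrow>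
            (\<forall>i<K. \<bar>eval_mlp net (mlp_input K t c) i - heat_step \<alpha> t c (i + 1)\<bar> \<le> \<epsilon>)))"
proof (intro exI[of _ 8] allI impI, goal_cases)
  case (1 \<epsilon> K)
  define a where "a k = 4 * pi^2 * (real k)^2 * \<alpha>" for k
  define M where "M = ln (10 / \<epsilon>) / 2"
  define net where "net = heat_net K a (\<epsilon> / 2) M"
  have "real (num_weights net) \<le> 8 * real K ^ 3"
    unfolding net_def using \<open>1 \<le> K\<close> by (rule num_weights_heat_net_le)
  then have size: "real (num_weights net) \<le> 8 * (real K ^ 3 + real K * (ln (1 / \<epsilon>))^2)"
    by (simp add: distrib_left add_increasing2)
  have "exp (-2*M) = \<epsilon> / 10"
    using \<open>0 < \<epsilon>\<close> by (simp add: M_def exp_minus)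
  then have "\<bar>eval_mlp net (mlp_input K t c) i - heat_step \<alpha> t c (i + 1)\<bar> \<le> \<epsilon>"
    if "0 \<le> t" "\<forall>k\<in>{1..K}. \<bar>c k\<bar> \<le> 1" "i < K" for t c i
    using eval_heat_net_approx[of "\<epsilon> / 2" a i "mlp_input K t c" K M] assms that
      \<open>0 < \<epsilon>\<close> \<open>\<epsilon> < 1\<close>
    by (simp add: net_def mlp_input_def heat_step_def a_def algebra_simps)
  then show ?case
    using mlp_dims_ok_heat_net size unfolding net_def by blast
qed

end
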